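(* Let $e\ge 3$, let $y\in[1,e-1]$ be rational with denominator $z>1$ (in lowest terms). Suppose $\lambda$ and $\mu$ are partitions lying in the same $(ez,yz)$-ladder class. Then $\lambda$ and $\mu$ have the same number of $y$-bad hooks.
   Context: Partitions are identified with Young diagrams $\{(r,c)\in\mathbb N^2: c\le\lambda_r\}$ (rows counted downwards, columns to the right). The hook of $\lambda$ at a node $(r,c)$ consists of all nodes of $\lambda$ of the form $(r,c')$ with $c'\ge c$ or $(r',c)$ with $r'\ge r$; its length is $\lambda_r-c+\lambda'_c-r+1$ and its arm length is $\lambda_r-c$. For integers $1\le y'<e'$, the $(e',y')$-ladder through $(r,c)\in\mathbb Z^2$ is $\{(r+k(y'-e'),\,c+ky'):k\in\mathbb Z\}$; these ladders partition $\mathbb Z^2$. Two partitions $\lambda,\mu$ are $(e',y')$-equivalent if $|\mathcal L\cap\lambda|=|\mathcal L\cap\mu|$ for every $(e',y')$-ladder $\mathcal L$; the equivalence classes are called $(e',y')$-ladder classes. A hook is $y$-bad if it has length $te$ and arm length $\lfloor yt\rfloor$ for some positive integer $t$ not divisible by $z$. *)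

theory Defs
  imports Complex_Main
begin

definition is_partition :: "nat list \<Rightarrow> bool" where
  "is_partition la \<longleftrightarrow> sorted_wrt (\<ge>) la \<and> 0 \<notin> set la"

definition part_row :: "nat list \<Rightarrow> nat \<Rightarrow> nat" where
  "part_row la r = (if 1 \<le> r \<and> r \<le> length la then la ! (r - 1) else 0)"

definition part_col :: "nat list \<Rightarrow> nat \<Rightarrow> nat" where
  "part_col la c = card {r. 1 \<le> r \<and> c \<le> part_row la r}"

definition diagram :: "nat list \<Rightarrow> (int \<times> int) set" where
  "diagram la = {(int r, int c) | r c. 1 \<le> r \<and> 1 \<le> c \<and> c \<le> part_row la r}"

definition hook_length :: "nat list \<Rightarrow> nat \<Rightarrow> nat \<Rightarrow> nat" where
  "hook_length la r c = part_row la r - c + part_col la c - r + 1"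

definition arm_length :: "nat list \<Rightarrow> nat \<Rightarrow> nat \<Rightarrow> nat" where
  "arm_length la r c = part_row la r - c"

definition ladder :: "int \<Rightarrow> int \<Rightarrow> int \<times> int \<Rightarrow> (int \<times> int) set" where
  "ladder e' y' p = {(fst p + k * (y' - e'), snd p + k * y') | k. True}"

definition ladder_equiv :: "int \<Rightarrow> int \<Rightarrow> nat list \<Rightarrow> nat list \<Rightarrow> bool" where
  "ladder_equiv e' y' la mu \<longleftrightarrow>
     (\<forall>p. card (ladder e' y' p \<inter> diagram la) = card (ladder e' y' p \<inter> diagram mu))"

definition bad_hook :: "nat \<Rightarrow> rat \<Rightarrow> nat \<Rightarrow> nat \<Rightarrow> nat \<Rightarrow> bool" where
  "bad_hook e y z hl al \<longleftrightarrow>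
     (\<exists>t::nat. 0 < t \<and> \<not> z dvd t \<and> hl = t * e \<and> int al = \<lfloor>y * of_nat t\<rfloor>)"

definition num_bad_hooks :: "nat \<Rightarrow> rat \<Rightarrow> nat \<Rightarrow> nat list \<Rightarrow> nat" where
  "num_bad_hooks e y z la = card {(r, c). 1 \<le> r \<and> 1 \<le> c \<and> c \<le> part_row la r \<and>
       bad_hook e y z (hook_length la r c) (arm_length la r c)}"

end

theory Submission
  imports Defs
begin

text \<open>Put the diagram below a large frame and look at its right border (the cells just right of
  each row) and its lower border (the cells just below each column). With \<open>f t = \<lfloor>y t\<rfloor>\<close>, call a
  right-border cell \<open>v\<close> and a lower-border cell \<open>h\<close> linked if
  \<open>v - h = (f t - t e, f t + 1)\<close> for some \<open>t\<close> with \<open>z \<nmid> t\<close>. Since \<open>f (t + z) = f t + y z\<close>,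
  replacing \<open>t\<close> by \<open>t + z\<close> moves \<open>h\<close> along an \<open>(e z, y z)\<close>-ladder, so being linked only
  depends on the ladders of \<open>v\<close> and \<open>h\<close>. The ladder counts of both borders are determined by
  those of the diagram, hence the number of linked pairs is an invariant of the ladder class.

  For \<open>t > 0\<close> the links are exactly the \<open>y\<close>-bad hooks: the hook at \<open>(row of v, column of h)\<close>
  has arm \<open>f t\<close> and length \<open>t e\<close>. For \<open>t < 0\<close> a telescoping argument down the rows shows
  that there are as many links with parameter \<open>-t\<close> as with \<open>t\<close>, up to a correction that
  depends only on \<open>t\<close> and the frame size. So the number of linked pairs is twice the number of
  bad hooks plus a constant.\<close>

lemma mem_ladder_iff: "q \<in> ladder e' y' p \<longleftrightarrow> (\<exists>k. q = (fst p + k * (y' - e'), snd p + k * y'))"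
  by (auto simp: ladder_def)

lemma ladder_self: "p \<in> ladder e' y' p"
  unfolding mem_ladder_iff by (rule exI[of _ 0]) simp

lemma ladder_eq_if_mem:
  assumes "q \<in> ladder e' y' p"
  shows "ladder e' y' q = ladder e' y' p"
proof -
  from assms obtain k where q: "q = (fst p + k * (y' - e'), snd p + k * y')"
    by (auto simp: mem_ladder_iff)
  show ?thesis
  proof (intro set_eqI iffI)
    fix x assume "x \<in> ladder e' y' q"
    then obtain j where "x = (fst q + j * (y' - e'), snd q + j * y')" by (auto simp: mem_ladder_iff)
    then have "x = (fst p + (k + j) * (y' - e'), snd p + (k + j) * y')" using q by (simp add: algebra_simps)
    then show "x \<in> ladder e' y' p" by (auto simp: mem_ladder_iff)
  next
    fix x assume "x \<in> ladder e' y' p"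
    then obtain j where "x = (fst p + j * (y' - e'), snd p + j * y')" by (auto simp: mem_ladder_iff)
    then have "x = (fst q + (j - k) * (y' - e'), snd q + (j - k) * y')" using q by (simp add: algebra_simps)
    then show "x \<in> ladder e' y' q" by (auto simp: mem_ladder_iff)
  qed
qed

lemma mem_ladder_iff_ladder_eq: "q \<in> ladder e' y' p \<longleftrightarrow> ladder e' y' q = ladder e' y' p"
  using ladder_eq_if_mem ladder_self by metis

lemma ladder_shift_col: "{x. (fst x, snd x + 1) \<in> ladder e' y' p} = ladder e' y' (fst p, snd p - 1)"
proof -
  have "(\<exists>k. (fst x, snd x + 1) = (fst p + k * (y' - e'), snd p + k * y')) \<longleftrightarrow>
        (\<exists>k. x = (fst p + k * (y' - e'), snd p - 1 + k * y'))" for x :: "int \<times> int"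
    by (intro ex_cong1) (auto simp: prod_eq_iff algebra_simps)
  then show ?thesis by (auto simp: mem_ladder_iff)
qed

lemma ladder_shift_row: "{x. (fst x + 1, snd x) \<in> ladder e' y' p} = ladder e' y' (fst p - 1, snd p)"
proof -
  have "(\<exists>k. (fst x + 1, snd x) = (fst p + k * (y' - e'), snd p + k * y')) \<longleftrightarrow>
        (\<exists>k. x = (fst p - 1 + k * (y' - e'), snd p + k * y'))" for x :: "int \<times> int"
    by (intro ex_cong1) (auto simp: prod_eq_iff algebra_simps)
  then show ?thesis by (auto simp: mem_ladder_iff)
qed

lemma sum_eq_if_same_ladder_counts:
  fixes f :: "int \<times> int \<Rightarrow> 'b::comm_semiring_1"
  assumes fin: "finite X" "finite Y"
    and counts: "\<And>p. card (ladder e' y' p \<inter> X) = card (ladder e' y' p \<inter> Y)"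
    and const: "\<And>p q. q \<in> ladder e' y' p \<Longrightarrow> f q = f p"
  shows "sum f X = sum f Y"
proof -
  let ?L = "ladder e' y'"
  have fibre: "{x \<in> Z. ?L x = ?L p} = Z \<inter> ?L p" for Z p
    using mem_ladder_iff_ladder_eq by blast
  have sum_fibre: "sum f (Z \<inter> ?L p) = of_nat (card (?L p \<inter> Z)) * f p" for Z p
  proof -
    have "sum f (Z \<inter> ?L p) = sum (\<lambda>_. f p) (Z \<inter> ?L p)"
      by (rule sum.cong) (auto intro: const)
    then show ?thesis by (simp add: Int_commute)
  qed
  have ladders_sub: "?L ` X' \<subseteq> ?L ` Y'"
    if "finite X'" "\<And>p. card (?L p \<inter> X') = card (?L p \<inter> Y')" for X' Y'
  proof
    fix L assume "L \<in> ?L ` X'"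
    then obtain x where x: "x \<in> X'" "L = ?L x" by auto
    then have "x \<in> ?L x \<inter> X'" using ladder_self by blast
    then have "card (?L x \<inter> Y') > 0" using that by (metis card_gt_0_iff empty_iff finite_Int)
    then obtain w where "w \<in> ?L x \<inter> Y'" by (auto simp: card_gt_0_iff)
    then show "L \<in> ?L ` Y'" using x mem_ladder_iff_ladder_eq by blast
  qed
  have ladders: "?L ` X = ?L ` Y"
    using ladders_sub[OF fin(1) counts] ladders_sub[OF fin(2) counts[symmetric]] by blast
  have "sum f X = (\<Sum>L\<in>?L ` X. sum f {x \<in> X. ?L x = L})"
    by (rule sum.image_gen[OF fin(1)])
  also have "\<dots> = (\<Sum>L\<in>?L ` X. sum f {x \<in> Y. ?L x = L})"
    by (rule sum.cong[OF refl]) (auto simp: fibre sum_fibre counts)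
  also have "\<dots> = sum f Y" unfolding ladders by (rule sum.image_gen[OF fin(2), symmetric])
  finally show ?thesis .
qed

lemma length_le_sum_list: "0 \<notin> set xs \<Longrightarrow> length xs \<le> sum_list xs"
  by (induct xs) auto

lemma part_row_le_sum_list: "part_row la r \<le> sum_list la"
  unfolding part_row_def by (auto intro: elem_le_sum_list)

lemma part_row_eq_0: "length la < r \<Longrightarrow> part_row la r = 0"
  unfolding part_row_def by auto

lemma part_row_antimono:
  assumes "is_partition la" "1 \<le> i" "i \<le> j"
  shows "part_row la j \<le> part_row la i"
proof (cases "j \<le> length la \<and> i \<noteq> j")
  case True
  then have "la ! (j - 1) \<le> la ! (i - 1)"
    using sorted_wrt_nth_less[of "(\<ge>)" la "i - 1" "j - 1"] assms
    unfolding is_partition_def by auto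
  then show ?thesis using True assms unfolding part_row_def by auto
next
  case False
  then show ?thesis by (auto simp: part_row_eq_0)
qed

lemma part_col_rows:
  assumes la: "is_partition la" and c: "1 \<le> c"
  shows "{r. 1 \<le> r \<and> c \<le> part_row la r} = {1..part_col la c}"
proof -
  let ?S = "{r. 1 \<le> r \<and> c \<le> part_row la r}"
  have "?S \<subseteq> {1..length la}"
    using c part_row_eq_0[of la] by (fastforce simp: not_less[symmetric])
  then have fin: "finite ?S" using finite_subset by blast
  have "?S = {1..card ?S}"
  proof (cases "?S = {}")
    case True
    then show ?thesis by (simp only: True) simp
  next
    case False
    define mx where "mx = Max ?S"
    have mx: "mx \<in> ?S" unfolding mx_def using Max_in[OF fin False] .
    have "?S = {1..mx}"
    proof (intro set_eqI iffI)
      fix r assume "r \<in> ?S"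
      then show "r \<in> {1..mx}" using Max_ge[OF fin] unfolding mx_def by auto
    next
      fix r assume r: "r \<in> {1..mx}"
      have "part_row la mx \<le> part_row la r" using part_row_antimono[OF la, of r mx] r by auto
      then show "r \<in> ?S" using mx r by auto
    qed
    then show ?thesis by simp
  qed
  then show ?thesis unfolding part_col_def by simp
qed

lemma le_part_row_iff_le_part_col:
  assumes "is_partition la" "1 \<le> c" "1 \<le> r"
  shows "c \<le> part_row la r \<longleftrightarrow> r \<le> part_col la c"
  using part_col_rows[OF assms(1,2)] assms(3)
  by (metis (no_types, lifting) atLeastAtMost_iff mem_Collect_eq)

lemma part_col_le_length:
  assumes "is_partition la" "1 \<le> c"
  shows "part_col la c \<le> length la"
proof (rule ccontr)
  assume len: "\<not> part_col la c \<le> length la"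
  then have "c \<le> part_row la (part_col la c)"
    using le_part_row_iff_le_part_col[OF assms, of "part_col la c"] by auto
  then show False using part_row_eq_0[of la "part_col la c"] assms len by auto
qed

lemma int_hook_length:
  assumes "r \<le> part_col la c" "c \<le> part_row la r"
  shows "int (hook_length la r c) = int (part_row la r) - int c + int (part_col la c) - int r + 1"
  using assms unfolding hook_length_def by (simp add: of_nat_diff)

text \<open>Rows of index \<open>\<le> 0\<close> get length \<open>M\<close>: the diagram hangs below a frame of \<open>M\<close>
  columns, so that every column \<open>1..M\<close> has a lower end.\<close>
definition framed_row :: "nat list \<Rightarrow> int \<Rightarrow> int \<Rightarrow> int" where
  "framed_row la M j = (if j \<le> 0 then M else int (part_row la (nat j)))"

lemma framed_row_nonneg: "0 \<le> M \<Longrightarrow> 0 \<le> framed_row la M j"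
  unfolding framed_row_def by auto

lemma framed_row_eq_0: "int (length la) < j \<Longrightarrow> framed_row la M j = 0"
  unfolding framed_row_def by (auto simp: part_row_eq_0)

lemma framed_row_le:
  assumes "is_partition la" "int (part_row la 1) \<le> n" "0 < j"
  shows "framed_row la M j \<le> n"
proof -
  have "part_row la (nat j) \<le> part_row la 1"
    using part_row_antimono[OF assms(1), of 1 "nat j"] assms(3) by auto
  then show ?thesis using assms unfolding framed_row_def by auto
qed

lemma framed_row_antimono:
  assumes la: "is_partition la" and M: "int (part_row la 1) \<le> M" and "i \<le> j"
  shows "framed_row la M j \<le> framed_row la M i"
proof -
  consider "j \<le> 0" | "i \<le> 0" "0 < j" | "0 < i" using \<open>i \<le> j\<close> by linarith
  then show ?thesis
  proof cases
    case 2
    then show ?thesis using framed_row_le[OF la M] by (simp add: framed_row_def)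
  next
    case 3
    then show ?thesis using part_row_antimono[OF la, of "nat i" "nat j"] \<open>i \<le> j\<close>
      by (simp add: framed_row_def)
  qed (use \<open>i \<le> j\<close> in \<open>simp add: framed_row_def\<close>)
qed

definition diagram_rows :: "nat list \<Rightarrow> int \<Rightarrow> int \<Rightarrow> (int \<times> int) set" where
  "diagram_rows la M N = (SIGMA r:{1..N}. {1..framed_row la M r})"

definition right_border :: "nat list \<Rightarrow> int \<Rightarrow> int \<Rightarrow> (int \<times> int) set" where
  "right_border la M N = (SIGMA r:{1..N}. {framed_row la M r + 1})"

definition lower_border :: "nat list \<Rightarrow> int \<Rightarrow> int \<Rightarrow> (int \<times> int) set" where
  "lower_border la M N = (SIGMA r:{1..N+1}. {framed_row la M r + 1 .. framed_row la M (r - 1)})"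

lemma finite_diagram_rows: "finite (diagram_rows la M N)"
  unfolding diagram_rows_def by auto

lemma finite_right_border: "finite (right_border la M N)"
  unfolding right_border_def by auto

lemma finite_lower_border: "finite (lower_border la M N)"
  unfolding lower_border_def by auto

lemma mem_lower_border_iff:
  "(R, C) \<in> lower_border la M N \<longleftrightarrow>
     1 \<le> R \<and> R \<le> N + 1 \<and> framed_row la M R + 1 \<le> C \<and> C \<le> framed_row la M (R - 1)"
  unfolding lower_border_def by auto

lemma diagram_eq_diagram_rows:
  assumes "int (length la) \<le> N"
  shows "diagram la = diagram_rows la M N"
proof (intro set_eqI iffI)
  fix x assume "x \<in> diagram la"
  then obtain r c where x: "x = (int r, int c)" "1 \<le> r" "1 \<le> c" "c \<le> part_row la r"
    unfolding diagram_def by auto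
  then have "r \<le> length la" using part_row_eq_0[of la r] by (cases "length la < r") auto
  then show "x \<in> diagram_rows la M N" using x assms unfolding diagram_rows_def framed_row_def by auto
next
  fix x assume "x \<in> diagram_rows la M N"
  then obtain r c where x: "x = (r, c)" "1 \<le> r" "r \<le> N" "1 \<le> c" "c \<le> framed_row la M r"
    unfolding diagram_rows_def by auto
  then have "x = (int (nat r), int (nat c))" "1 \<le> nat r" "1 \<le> nat c" "nat c \<le> part_row la (nat r)"
    unfolding framed_row_def by auto
  then show "x \<in> diagram la" unfolding diagram_def by blast
qed

lemma card_Int_Un_disjoint:
  "finite A \<Longrightarrow> finite B \<Longrightarrow> A \<inter> B = {} \<Longrightarrow> card (G \<inter> (A \<union> B)) = card (G \<inter> A) + card (G \<inter> B)"
  by (subst card_Un_disjoint[symmetric]) (auto simp: Int_Un_distrib)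

lemma card_Int_image: "inj f \<Longrightarrow> card (G \<inter> f ` D) = card ({x. f x \<in> G} \<inter> D)"
proof -
  assume "inj f"
  have "G \<inter> f ` D = f ` ({x. f x \<in> G} \<inter> D)" by auto
  then show ?thesis using \<open>inj f\<close> by (simp add: card_image inj_on_subset)
qed

text \<open>Both sides count the cells of \<open>G\<close> among the diagram rows extended by one cell, read
  once as diagram plus right border and once as first column plus shifted diagram.\<close>
lemma card_right_border:
  "card (G \<inter> diagram_rows la M N) + card (G \<inter> right_border la M N) =
   card (G \<inter> (SIGMA r:{1..N}. {1})) + card ({x. (fst x, snd x + 1) \<in> G} \<inter> diagram_rows la M N)"
proof -
  let ?S = "SIGMA r:{1..N}. {1..framed_row la M r + 1}"
  let ?shift = "\<lambda>x::int \<times> int. (fst x, snd x + 1)"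
  have split1: "?S = diagram_rows la M N \<union> right_border la M N"
    unfolding diagram_rows_def right_border_def by (auto simp: framed_row_def)
  have split2: "?S = (SIGMA r:{1..N}. {1}) \<union> ?shift ` diagram_rows la M N"
  proof (intro set_eqI iffI)
    fix x assume x: "x \<in> ?S"
    show "x \<in> (SIGMA r:{1..N}. {1}) \<union> ?shift ` diagram_rows la M N"
    proof (cases "snd x = 1")
      case False
      then have "(fst x, snd x - 1) \<in> diagram_rows la M N" using x unfolding diagram_rows_def by auto
      then show ?thesis by (intro UnI2 image_eqI[where x="(fst x, snd x - 1)"]) auto
    qed (use x in auto)
  next
    fix x assume "x \<in> (SIGMA r:{1..N}. {1}) \<union> ?shift ` diagram_rows la M N"
    then show "x \<in> ?S" unfolding diagram_rows_def by (auto simp: framed_row_def)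
  qed
  have "inj ?shift" by (auto simp: inj_def prod_eq_iff)
  have "card (G \<inter> ?S) = card (G \<inter> diagram_rows la M N) + card (G \<inter> right_border la M N)"
    unfolding split1 by (rule card_Int_Un_disjoint)
      (auto simp: finite_diagram_rows finite_right_border diagram_rows_def right_border_def)
  moreover have "card (G \<inter> ?S) =
      card (G \<inter> (SIGMA r:{1..N}. {1})) + card ({x. ?shift x \<in> G} \<inter> diagram_rows la M N)"
    unfolding split2
    by (subst card_Int_Un_disjoint) (auto simp: finite_diagram_rows diagram_rows_def card_Int_image[OF \<open>inj ?shift\<close>])
  ultimately show ?thesis by simp
qed

text \<open>Likewise the framed columns, each extended down by one cell, are the diagram plus the lower
  border, and also the frame row plus the diagram shifted down.\<close>
lemma card_lower_border:
  assumes la: "is_partition la" and M: "int (part_row la 1) \<le> M" and N: "int (length la) \<le> N"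
  shows "card (G \<inter> diagram_rows la M N) + card (G \<inter> lower_border la M N) =
         card (G \<inter> (SIGMA r:{1..1}. {1..M})) + card ({x. (fst x + 1, snd x) \<in> G} \<inter> diagram_rows la M N)"
proof -
  let ?S = "SIGMA r:{1..N+1}. {1..framed_row la M (r - 1)}"
  let ?shift = "\<lambda>x::int \<times> int. (fst x + 1, snd x)"
  have last: "framed_row la M (N + 1) = 0" using framed_row_eq_0 N by auto
  have anti: "framed_row la M r \<le> framed_row la M (r - 1)" for r
    using framed_row_antimono[OF la M] by auto
  have nonneg: "0 \<le> framed_row la M r" for r using framed_row_nonneg M by force
  have split1: "?S = diagram_rows la M N \<union> lower_border la M N"
  proof (intro set_eqI iffI)
    fix x assume x: "x \<in> ?S"
    obtain r c where rc: "x = (r, c)" by force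
    show "x \<in> diagram_rows la M N \<union> lower_border la M N"
    proof (cases "c \<le> framed_row la M r")
      case True
      then have "r \<noteq> N + 1" using last x rc by auto
      then show ?thesis using x True rc unfolding diagram_rows_def by auto
    next
      case False
      then show ?thesis using x rc unfolding lower_border_def by auto
    qed
  next
    fix x assume x: "x \<in> diagram_rows la M N \<union> lower_border la M N"
    obtain r c where rc: "x = (r, c)" by force
    show "x \<in> ?S"
      using x anti[of r] nonneg[of r] unfolding rc diagram_rows_def lower_border_def by auto
  qed
  have split2: "?S = (SIGMA r:{1..1}. {1..M}) \<union> ?shift ` diagram_rows la M N"
  proof (intro set_eqI iffI)
    fix x assume x: "x \<in> ?S"
    obtain r c where rc: "x = (r, c)" by force
    show "x \<in> (SIGMA r:{1..1}. {1..M}) \<union> ?shift ` diagram_rows la M N"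
    proof (cases "r = 1")
      case True
      then show ?thesis using x rc by (auto simp: framed_row_def)
    next
      case False
      then have "(r - 1, c) \<in> diagram_rows la M N" using x rc unfolding diagram_rows_def by auto
      then show ?thesis using rc by (intro UnI2 image_eqI[where x="(r - 1, c)"]) auto
    qed
  next
    fix x assume "x \<in> (SIGMA r:{1..1}. {1..M}) \<union> ?shift ` diagram_rows la M N"
    then show "x \<in> ?S" using N unfolding diagram_rows_def by (auto simp: framed_row_def)
  qed
  have "inj ?shift" by (auto simp: inj_def prod_eq_iff)
  have "card (G \<inter> ?S) = card (G \<inter> diagram_rows la M N) + card (G \<inter> lower_border la M N)"
    unfolding split1 by (rule card_Int_Un_disjoint)
      (simp_all add: finite_diagram_rows finite_lower_border, force simp: diagram_rows_def lower_border_def)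
  moreover have "card (G \<inter> ?S) =
      card (G \<inter> (SIGMA r:{1..1}. {1..M})) + card ({x. ?shift x \<in> G} \<inter> diagram_rows la M N)"
    unfolding split2
    by (subst card_Int_Un_disjoint) (auto simp: finite_diagram_rows diagram_rows_def card_Int_image[OF \<open>inj ?shift\<close>])
  ultimately show ?thesis by simp
qed

lemma ladder_equiv_border_counts:
  assumes equiv: "ladder_equiv e' y' la mu"
    and la: "is_partition la" and mu: "is_partition mu"
    and "int (part_row la 1) \<le> M" "int (part_row mu 1) \<le> M"
    and "int (length la) \<le> N" "int (length mu) \<le> N"
  shows "card (ladder e' y' p \<inter> right_border la M N) = card (ladder e' y' p \<inter> right_border mu M N)"
    and "card (ladder e' y' p \<inter> lower_border la M N) = card (ladder e' y' p \<inter> lower_border mu M N)"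
proof -
  have diagram: "card (ladder e' y' q \<inter> diagram_rows la M N) = card (ladder e' y' q \<inter> diagram_rows mu M N)" for q
    using equiv assms(6,7) unfolding ladder_equiv_def by (metis diagram_eq_diagram_rows)
  show "card (ladder e' y' p \<inter> right_border la M N) = card (ladder e' y' p \<inter> right_border mu M N)"
    using card_right_border[of "ladder e' y' p" la M N] card_right_border[of "ladder e' y' p" mu M N]
    unfolding ladder_shift_col using diagram by simp
  show "card (ladder e' y' p \<inter> lower_border la M N) = card (ladder e' y' p \<inter> lower_border mu M N)"
    using card_lower_border[OF la assms(4,6), of "ladder e' y' p"] card_lower_border[OF mu assms(5,7), of "ladder e' y' p"]
    unfolding ladder_shift_row using diagram by simp
qed

lemma card_filter_insert:
  "finite A \<Longrightarrow> x \<notin> A \<Longrightarrow> card {j \<in> insert x A. P j} = card {j \<in> A. P j} + of_bool (P x)"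
proof -
  assume "finite A" "x \<notin> A"
  have "{j \<in> insert x A. P j} = (if P x then insert x {j \<in> A. P j} else {j \<in> A. P j})" by auto
  then show ?thesis using \<open>finite A\<close> \<open>x \<notin> A\<close> by simp
qed

text \<open>For antitone \<open>a\<close> and \<open>b\<close>, the truth value of \<open>b j < a j\<close> switches off exactly at the
  indices of the left-hand set and back on exactly at those of the right-hand set.\<close>
lemma crossings_balance:
  fixes a b :: "int \<Rightarrow> int"
  assumes "\<And>j. 0 \<le> j \<Longrightarrow> a (j + 1) \<le> a j" and "\<And>j. 0 \<le> j \<Longrightarrow> b (j + 1) \<le> b j"
    and "0 \<le> J"
  shows "int (card {j\<in>{0..J}. a (j + 1) \<le> b (j + 1) \<and> b (j + 1) < a j}) + of_bool (b (J + 1) < a (J + 1))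
       = int (card {j\<in>{1..J}. b (j + 1) < a j \<and> a j \<le> b j}) + of_bool (b 1 < a 0)"
  using \<open>0 \<le> J\<close>
proof (induction J rule: int_ge_induct)
  case base
  have "{j\<in>{0..0::int}. a (j + 1) \<le> b (j + 1) \<and> b (j + 1) < a j} = (if a 1 \<le> b 1 \<and> b 1 < a 0 then {0} else {})"
    by auto
  then show ?case using assms(1)[of 0] by auto
next
  case (step J)
  let ?down = "\<lambda>j. a (j + 1) \<le> b (j + 1) \<and> b (j + 1) < a j"
  let ?up = "\<lambda>j. b (j + 1) < a j \<and> a j \<le> b j"
  have "{0..J + 1} = insert (J + 1) {0..J}" "{1..J + 1} = insert (J + 1) {1..J}"
    using step by auto
  then have "card {j\<in>{0..J + 1}. ?down j} = card {j\<in>{0..J}. ?down j} + of_bool (?down (J + 1))"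
    "card {j\<in>{1..J + 1}. ?up j} = card {j\<in>{1..J}. ?up j} + of_bool (?up (J + 1))"
    by (simp_all only:) (rule card_filter_insert; simp)+
  moreover have "a (J + 1 + 1) \<le> a (J + 1)" "b (J + 1 + 1) \<le> b (J + 1)"
    using assms(1,2)[of "J + 1"] step by simp_all
  ultimately show ?case using step.IH by (auto simp: of_bool_def)
qed

locale rational_slope =
  fixes e :: nat and y :: rat and a z :: int
  assumes e_ge_3: "e \<ge> 3" and y_ge_1: "1 \<le> y" and y_le: "y \<le> of_nat e - 1"
    and quotient_y: "quotient_of y = (a, z)" and z_gt_1: "z > 1"
begin

definition floor_y :: "int \<Rightarrow> int" where
  "floor_y t = \<lfloor>y * of_int t\<rfloor>"

lemma y_mult_z: "y * of_int z = of_int a"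
  using quotient_of_div[OF quotient_y] z_gt_1 by simp

lemma floor_y_add_mult_z: "floor_y (t + k * z) = floor_y t + k * a"
proof -
  have "y * of_int (t + k * z) = y * of_int t + of_int (k * a)"
    using y_mult_z by (simp add: algebra_simps)
  then show ?thesis unfolding floor_y_def by (metis floor_add_int)
qed

lemma y_mult_not_int:
  assumes "\<not> z dvd t"
  shows "y * of_int t \<noteq> of_int (floor_y t)"
proof
  assume "y * of_int t = of_int (floor_y t)"
  then have "of_int (a * t) = (of_int (floor_y t * z) :: rat)"
    using y_mult_z by (metis mult.assoc mult.commute of_int_mult)
  then have "z dvd a * t" by (metis dvd_triv_right mult.commute of_int_eq_iff)
  then have "z dvd t"
    using quotient_of_coprime[OF quotient_y] by (simp add: coprime_commute coprime_dvd_mult_right_iff)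
  then show False using assms by simp
qed

lemma floor_y_uminus:
  assumes "\<not> z dvd t"
  shows "floor_y (- t) = - floor_y t - 1"
proof -
  have "of_int (floor_y t) < y * of_int t" "y * of_int t < of_int (floor_y t) + 1"
    using y_mult_not_int[OF assms] unfolding floor_y_def by (linarith, linarith)
  then show ?thesis unfolding floor_y_def by (intro floor_unique) (auto simp: floor_y_def)
qed

lemma floor_y_ge: "0 \<le> t \<Longrightarrow> t \<le> floor_y t"
  using mult_right_mono[OF y_ge_1, of "of_int t"] unfolding floor_y_def by (simp add: le_floor_iff)

lemma floor_y_le: "0 \<le> t \<Longrightarrow> floor_y t \<le> (int e - 1) * t"
  using mult_right_mono[OF y_le, of "of_int t"] unfolding floor_y_def by (simp add: floor_le_iff)

lemma floor_y_strict_mono: "t < t' \<Longrightarrow> floor_y t < floor_y t'"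
proof -
  assume "t < t'"
  then have "1 \<le> y * of_int (t' - t)"
    using mult_mono[OF y_ge_1, of 1 "of_int (t' - t)"] y_ge_1 by simp
  then have "\<lfloor>y * of_int t + 1\<rfloor> \<le> \<lfloor>y * of_int t'\<rfloor>"
    by (intro floor_mono) (simp add: algebra_simps)
  then show ?thesis unfolding floor_y_def by simp
qed

lemma floor_y_inj: "floor_y t = floor_y t' \<Longrightarrow> t = t'"
  using floor_y_strict_mono by (metis less_irrefl linorder_neqE)

text \<open>For \<open>t > 0\<close> this says exactly that the hook at
  \<open>(fst v, snd h)\<close> has arm \<open>floor_y t\<close> and length \<open>t e\<close>.\<close>
definition link_offset :: "int \<Rightarrow> int \<times> int" where
  "link_offset t = (floor_y t - t * int e, floor_y t + 1)"

definition linked :: "int \<times> int \<Rightarrow> int \<times> int \<Rightarrow> bool" where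
  "linked v h \<longleftrightarrow> (\<exists>t. \<not> z dvd t \<and> (fst v - fst h, snd v - snd h) = link_offset t)"

lemma link_offset_add_mult_z:
  "link_offset (t + k * z) = (fst (link_offset t) + k * (a - int e * z), snd (link_offset t) + k * a)"
  unfolding link_offset_def floor_y_add_mult_z by (simp add: algebra_simps)

lemma linked_if_ladders:
  assumes "v' \<in> ladder (int e * z) a v" "h' \<in> ladder (int e * z) a h" "linked v h"
  shows "linked v' h'"
proof -
  obtain k where v': "v' = (fst v + k * (a - int e * z), snd v + k * a)"
    using assms(1) by (auto simp: mem_ladder_iff)
  obtain j where h': "h' = (fst h + j * (a - int e * z), snd h + j * a)"
    using assms(2) by (auto simp: mem_ladder_iff)
  obtain t where t: "\<not> z dvd t" "(fst v - fst h, snd v - snd h) = link_offset t"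
    using assms(3) unfolding linked_def by auto
  have "\<not> z dvd (t + (k - j) * z)" using t(1) by (metis dvd_add_left_iff dvd_triv_right)
  moreover have "(fst v' - fst h', snd v' - snd h') = link_offset (t + (k - j) * z)"
    unfolding link_offset_add_mult_z using t(2) v' h' by (auto simp: prod_eq_iff algebra_simps)
  ultimately show ?thesis unfolding linked_def by blast
qed

lemma linked_ladder_invariant:
  "v' \<in> ladder (int e * z) a v \<Longrightarrow> h' \<in> ladder (int e * z) a h \<Longrightarrow> linked v' h' = linked v h"
  using linked_if_ladders by (metis ladder_self mem_ladder_iff_ladder_eq)

definition linked_pairs :: "nat list \<Rightarrow> int \<Rightarrow> int \<Rightarrow> nat" where
  "linked_pairs la M N = (\<Sum>v\<in>right_border la M N. \<Sum>h\<in>lower_border la M N. of_bool (linked v h))"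

lemma ladder_equiv_linked_pairs:
  assumes equiv: "ladder_equiv (int e * z) a la mu"
    and la: "is_partition la" and mu: "is_partition mu"
    and "int (part_row la 1) \<le> M" "int (part_row mu 1) \<le> M"
    and "int (length la) \<le> N" "int (length mu) \<le> N"
  shows "linked_pairs la M N = linked_pairs mu M N"
proof -
  note counts = ladder_equiv_border_counts[OF assms]
  have "linked_pairs la M N = (\<Sum>v\<in>right_border mu M N. \<Sum>h\<in>lower_border la M N. of_bool (linked v h))"
    unfolding linked_pairs_def
    by (rule sum_eq_if_same_ladder_counts[where e'="int e * z" and y'=a])
      (auto simp: counts finite_right_border linked_ladder_invariant[OF _ ladder_self] intro!: sum.cong)
  also have "\<dots> = (\<Sum>h\<in>lower_border la M N. \<Sum>v\<in>right_border mu M N. of_bool (linked v h))"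
    by (rule sum.swap)
  also have "\<dots> = (\<Sum>h\<in>lower_border mu M N. \<Sum>v\<in>right_border mu M N. of_bool (linked v h))"
    by (rule sum_eq_if_same_ladder_counts[where e'="int e * z" and y'=a])
      (auto simp: counts finite_lower_border linked_ladder_invariant[OF ladder_self] intro!: sum.cong)
  also have "\<dots> = linked_pairs mu M N" unfolding linked_pairs_def by (rule sum.swap)
  finally show ?thesis .
qed

definition links_at :: "nat list \<Rightarrow> int \<Rightarrow> int \<Rightarrow> int \<Rightarrow> int \<Rightarrow> bool" where
  "links_at la M N r t \<longleftrightarrow>
     (r + t * int e - floor_y t, framed_row la M r - floor_y t) \<in> lower_border la M N"

definition link_count :: "nat list \<Rightarrow> int \<Rightarrow> int \<Rightarrow> int \<Rightarrow> nat" where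
  "link_count la M N t = card {r \<in> {1..N}. links_at la M N r t}"

lemma linked_pairs_by_rows:
  "linked_pairs la M N = (\<Sum>r\<in>{1..N}. card {t. \<not> z dvd t \<and> links_at la M N r t})"
proof -
  let ?v = "\<lambda>r. (r, framed_row la M r + 1)"
  have border: "right_border la M N = ?v ` {1..N}" unfolding right_border_def by auto
  have "inj_on ?v {1..N}" by (auto simp: inj_on_def)
  have row: "(\<Sum>h\<in>lower_border la M N. of_bool (linked (?v r) h)) = card {t. \<not> z dvd t \<and> links_at la M N r t}"
    for r
  proof -
    let ?h = "\<lambda>t. (r + t * int e - floor_y t, framed_row la M r - floor_y t)"
    have "lower_border la M N \<inter> {h. linked (?v r) h} = ?h ` {t. \<not> z dvd t \<and> links_at la M N r t}"
    proof (intro set_eqI iffI)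
      fix h assume "h \<in> lower_border la M N \<inter> {h. linked (?v r) h}"
      then obtain t where "\<not> z dvd t" "h = ?h t" "h \<in> lower_border la M N"
        unfolding linked_def link_offset_def by (auto simp: prod_eq_iff algebra_simps)
      then show "h \<in> ?h ` {t. \<not> z dvd t \<and> links_at la M N r t}" unfolding links_at_def by auto
    next
      fix h assume "h \<in> ?h ` {t. \<not> z dvd t \<and> links_at la M N r t}"
      then show "h \<in> lower_border la M N \<inter> {h. linked (?v r) h}"
        unfolding linked_def links_at_def link_offset_def by (auto simp: algebra_simps)
    qed
    moreover have "inj ?h" by (rule injI) (auto dest: floor_y_inj)
    ultimately show ?thesis
      using finite_lower_border by (simp add: card_image inj_on_subset)
  qed
  show ?thesis
    unfolding linked_pairs_def border sum.reindex[OF \<open>inj_on ?v {1..N}\<close>] using row by (simp add: o_def)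
qed

lemma links_at_bounded:
  assumes "1 \<le> r" "r \<le> N" "\<not> z dvd t" "links_at la M N r t"
  shows "- N \<le> t \<and> t \<le> N"
proof (cases "0 \<le> t")
  case True
  have "r + t * int e - floor_y t \<le> N + 1"
    using assms(4) unfolding links_at_def mem_lower_border_iff by simp
  then show ?thesis using floor_y_le[OF True] assms True by (simp add: algebra_simps)
next
  case False
  have "1 \<le> r + t * int e - floor_y t"
    using assms(4) unfolding links_at_def mem_lower_border_iff by simp
  then show ?thesis
    using floor_y_uminus[of "- t"] floor_y_le[of "- t"] assms False by (simp add: algebra_simps)
qed

lemma linked_pairs_by_parameter:
  assumes "0 \<le> N"
  shows "linked_pairs la M N =
    (\<Sum>s\<in>{1..N}. of_bool (\<not> z dvd s) * (link_count la M N s + link_count la M N (- s)))"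
proof -
  let ?g = "\<lambda>t. of_bool (\<not> z dvd t) * link_count la M N t"
  have row: "card {t. \<not> z dvd t \<and> links_at la M N r t} = (\<Sum>t\<in>{-N..N}. of_bool (\<not> z dvd t \<and> links_at la M N r t))"
    if "r \<in> {1..N}" for r
  proof -
    have "{t. \<not> z dvd t \<and> links_at la M N r t} = {-N..N} \<inter> {t. \<not> z dvd t \<and> links_at la M N r t}"
      using links_at_bounded[of r N] that by auto
    then show ?thesis by simp
  qed
  have "linked_pairs la M N = (\<Sum>r\<in>{1..N}. \<Sum>t\<in>{-N..N}. of_bool (\<not> z dvd t \<and> links_at la M N r t))"
    unfolding linked_pairs_by_rows using row by (intro sum.cong) auto
  also have "\<dots> = (\<Sum>t\<in>{-N..N}. \<Sum>r\<in>{1..N}. of_bool (\<not> z dvd t \<and> links_at la M N r t))"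
    by (rule sum.swap)
  also have "\<dots> = sum ?g {-N..N}"
    unfolding link_count_def by (intro sum.cong) (auto simp: Int_def conj_commute)
  also have "{-N..N} = insert 0 ({1..N} \<union> uminus ` {1..N})" using assms by auto
  also have "sum ?g \<dots> = ?g 0 + (sum ?g {1..N} + sum ?g (uminus ` {1..N}))"
    by (subst sum.insert, simp, force, subst sum.union_disjoint) auto
  also have "sum ?g (uminus ` {1..N}) = sum (\<lambda>s. ?g (- s)) {1..N}"
    by (subst sum.reindex) (auto simp: inj_on_def)
  finally show ?thesis using z_gt_1 by (simp add: sum.distrib algebra_simps)
qed

lemma link_count_pos:
  assumes "1 \<le> s"
  defines "m \<equiv> floor_y s" and "l \<equiv> s * int e - 1 - floor_y s"
  shows "link_count la M N s = card {j\<in>{1..N - l}.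
    framed_row la M (j + 1 + l) + m < framed_row la M j \<and> framed_row la M j \<le> framed_row la M (j + l) + m}"
proof -
  have "0 \<le> l" using floor_y_le[of s] assms by (simp add: algebra_simps)
  then show ?thesis
    unfolding link_count_def links_at_def mem_lower_border_iff l_def m_def
    by (intro arg_cong[where f=card] set_eqI) (auto simp: algebra_simps)
qed

lemma link_count_neg:
  assumes "1 \<le> s" "\<not> z dvd s"
  defines "m \<equiv> floor_y s" and "l \<equiv> s * int e - 1 - floor_y s"
  shows "link_count la M N (- s) = card {j\<in>{0..N - l - 1}.
    framed_row la M (j + 1) \<le> framed_row la M (j + 1 + l) + m \<and> framed_row la M (j + 1 + l) + m < framed_row la M j}"
proof -
  have "0 \<le> l" using floor_y_le[of s] assms by (simp add: algebra_simps)
  have "{r\<in>{1..N}. links_at la M N r (- s)} = (\<lambda>j. j + l + 1) ` {j\<in>{0..N - l - 1}.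
    framed_row la M (j + 1) \<le> framed_row la M (j + 1 + l) + m \<and> framed_row la M (j + 1 + l) + m < framed_row la M j}"
    (is "_ = _ ` ?J")
  proof (intro set_eqI iffI)
    fix r assume "r \<in> {r\<in>{1..N}. links_at la M N r (- s)}"
    then have "r - l - 1 \<in> ?J"
      unfolding links_at_def mem_lower_border_iff floor_y_uminus[OF assms(2)] l_def m_def
      by (auto simp: algebra_simps)
    then show "r \<in> (\<lambda>j. j + l + 1) ` ?J" by (intro image_eqI[where x="r - l - 1"]) auto
  next
    fix r assume "r \<in> (\<lambda>j. j + l + 1) ` ?J"
    then show "r \<in> {r\<in>{1..N}. links_at la M N r (- s)}"
      using \<open>0 \<le> l\<close> unfolding links_at_def mem_lower_border_iff floor_y_uminus[OF assms(2)] l_def m_def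
      by (auto simp: algebra_simps)
  qed
  then show ?thesis unfolding link_count_def by (simp add: card_image inj_on_def)
qed

text \<open>The frame is chosen so large (\<open>N\<close>, \<open>M\<close> far beyond the size \<open>n\<close> of the diagram) that the
  boundary terms of the telescoping depend on \<open>s\<close> only.\<close>
lemma link_count_uminus:
  assumes la: "is_partition la" and len: "int (length la) \<le> n" and row1: "int (part_row la 1) \<le> n"
    and N: "N = (int e + 1) * n + 1" and M: "M = n + int e * N + 1"
    and s: "1 \<le> s" "s \<le> N" "\<not> z dvd s"
  shows "link_count la M N (- s) = link_count la M N s + of_bool (s * int e - 1 - floor_y s \<le> N - 1)"
proof -
  define m where "m = floor_y s"
  define l where "l = s * int e - 1 - m"
  define a where "a = framed_row la M"
  define b where "b j = framed_row la M (j + l) + m" for j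
  have "0 \<le> n" using len by linarith
  have "n < N" using N \<open>0 \<le> n\<close> by (simp add: algebra_simps add_pos_nonneg)
  have m_ge: "s \<le> m" and m_le: "m \<le> (int e - 1) * s"
    unfolding m_def using floor_y_ge floor_y_le s by simp_all
  have "s - 1 \<le> l" using m_le unfolding l_def by (simp add: algebra_simps)
  have "int (part_row la 1) \<le> M" using row1 M \<open>n < N\<close> by (simp add: add_increasing2)
  note anti = framed_row_antimono[OF la this]
  have beyond: "framed_row la M j = 0" if "n < j" for j using framed_row_eq_0 len that by auto
  have count_neg: "link_count la M N (- s) = card {j\<in>{0..N - l - 1}. a (j + 1) \<le> b (j + 1) \<and> b (j + 1) < a j}"
    using link_count_neg[OF s(1,3)] unfolding a_def b_def l_def m_def by (simp add: add.assoc)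
  have count_pos: "link_count la M N s = card {j\<in>{1..N - l}. b (j + 1) < a j \<and> a j \<le> b j}"
    using link_count_pos[OF s(1)] unfolding a_def b_def l_def m_def by (simp add: add.assoc)
  show ?thesis
  proof (cases "l \<le> N - 1")
    case False
    then show ?thesis using count_neg count_pos unfolding l_def m_def by simp
  next
    case True
    define J where "J = N - l - 1"
    have "0 \<le> J" using True J_def by simp
    have "{1..N - l} = insert (J + 1) {1..J}" using \<open>0 \<le> J\<close> J_def by auto
    moreover have "b (J + 1) = m" "b (J + 1 + 1) = m"
      unfolding b_def J_def using beyond \<open>n < N\<close> by simp_all
    ultimately have count_pos': "link_count la M N s = card {j\<in>{1..J}. b (j + 1) < a j \<and> a j \<le> b j}"
      using count_pos card_filter_insert[of "{1..J}" "J + 1"] by simp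
    have "\<not> b (J + 1) < a (J + 1)"
    proof
      assume "b (J + 1) < a (J + 1)"
      then have m_lt: "m < framed_row la M (N - l)" using \<open>b (J + 1) = m\<close> unfolding a_def J_def by simp
      then have "N - l \<le> n" using beyond[of "N - l"] m_ge s by (cases "n < N - l") auto
      moreover have "m < n" using m_lt framed_row_le[OF la row1, of "N - l" M] True by simp
      then have "s * (int e - 1) \<le> (n - 1) * (int e - 1)"
        using m_ge e_ge_3 by (intro mult_right_mono) auto
      ultimately show False using N m_ge \<open>0 \<le> n\<close> unfolding l_def by (simp add: algebra_simps)
    qed
    moreover have "b 1 < a 0"
    proof -
      have "(int e - 1) * s \<le> (int e - 1) * N" using s e_ge_3 by (intro mult_left_mono) auto
      moreover have "framed_row la M (1 + l) \<le> n" using framed_row_le[OF la row1] \<open>s - 1 \<le> l\<close> s by simp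
      ultimately show ?thesis
        unfolding a_def b_def framed_row_def using m_le M \<open>n < N\<close> \<open>0 \<le> n\<close> by (simp add: algebra_simps)
    qed
    moreover have "int (card {j\<in>{0..J}. a (j + 1) \<le> b (j + 1) \<and> b (j + 1) < a j}) + of_bool (b (J + 1) < a (J + 1))
       = int (card {j\<in>{1..J}. b (j + 1) < a j \<and> a j \<le> b j}) + of_bool (b 1 < a 0)"
      by (rule crossings_balance[OF _ _ \<open>0 \<le> J\<close>]) (simp_all add: a_def b_def anti)
    ultimately show ?thesis
      using count_neg count_pos' True unfolding J_def l_def[symmetric] m_def[symmetric] by simp
  qed
qed

lemma nat_z_dvd_iff: "nat z dvd t \<longleftrightarrow> z dvd int t"
  using z_gt_1 by (simp add: nat_dvd_iff)

text \<open>A link with parameter \<open>s > 0\<close> from row \<open>r\<close> ends below column \<open>c\<close> in row \<open>K + 1\<close>,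
  so column \<open>c\<close> has length \<open>K\<close> and the hook at \<open>(r, c)\<close> has arm \<open>floor_y s\<close> and length \<open>s e\<close>.\<close>
lemma bad_hook_if_links_at:
  assumes la: "is_partition la" and s: "1 \<le> s" "\<not> z dvd s" and r: "1 \<le> r"
    and link: "links_at la M N r s"
  defines "c \<equiv> framed_row la M r - floor_y s"
  shows "1 \<le> c \<and> nat c \<le> part_row la (nat r) \<and>
    bad_hook e y (nat z) (hook_length la (nat r) (nat c)) (arm_length la (nat r) (nat c))"
proof -
  define m where "m = floor_y s"
  define K where "K = r + (s * int e - m) - 1"
  have m_ge: "s \<le> m" and m_le: "m \<le> (int e - 1) * s" unfolding m_def using floor_y_ge floor_y_le s by simp_all
  have "r \<le> K" using m_le s unfolding K_def by (simp add: algebra_simps)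
  have row_r: "framed_row la M r = int (part_row la (nat r))"
    and row_K: "framed_row la M K = int (part_row la (nat K))"
    and row_K1: "framed_row la M (K + 1) = int (part_row la (nat K + 1))"
    using r \<open>r \<le> K\<close> unfolding framed_row_def by (simp_all add: nat_add_distrib)
  from link have "framed_row la M (K + 1) + 1 \<le> c" "c \<le> framed_row la M K"
    unfolding links_at_def mem_lower_border_iff K_def m_def c_def by (simp_all add: algebra_simps)
  then have below: "part_row la (nat K + 1) + 1 \<le> c" and above: "c \<le> part_row la (nat K)"
    using row_K row_K1 by simp_all
  have "1 \<le> c" using below by simp
  have c_le: "nat c \<le> part_row la (nat r)" using row_r m_ge s unfolding c_def m_def by simp
  have "nat c \<le> part_row la (nat K)" "\<not> nat c \<le> part_row la (nat K + 1)"
    using below above by linarith+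
  then have col: "part_col la (nat c) = nat K"
    using le_part_row_iff_le_part_col[OF la, of "nat c" "nat K"]
      le_part_row_iff_le_part_col[OF la, of "nat c" "nat K + 1"] \<open>1 \<le> c\<close> \<open>r \<le> K\<close> r by simp
  have "nat r \<le> part_col la (nat c)" using col \<open>r \<le> K\<close> by simp
  then have "int (hook_length la (nat r) (nat c)) = int (part_row la (nat r)) - c + K - r + 1"
    using int_hook_length[OF _ c_le] col \<open>1 \<le> c\<close> \<open>r \<le> K\<close> r by simp
  then have "int (hook_length la (nat r) (nat c)) = s * int e"
    using row_r unfolding c_def K_def m_def by simp
  then have "int (hook_length la (nat r) (nat c)) = int (nat s * e)" using s by simp
  then have "hook_length la (nat r) (nat c) = nat s * e" by (simp only: of_nat_eq_iff)
  moreover have "int (arm_length la (nat r) (nat c)) = \<lfloor>y * of_nat (nat s)\<rfloor>"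
    using c_le row_r \<open>1 \<le> c\<close> s unfolding arm_length_def c_def floor_y_def by simp
  ultimately have "bad_hook e y (nat z) (hook_length la (nat r) (nat c)) (arm_length la (nat r) (nat c))"
    unfolding bad_hook_def using s nat_z_dvd_iff by (intro exI[of _ "nat s"]) simp
  then show ?thesis using \<open>1 \<le> c\<close> c_le by blast
qed

lemma links_at_if_bad_hook:
  assumes la: "is_partition la" and len: "int (length la) \<le> N"
    and rc: "1 \<le> r" "1 \<le> c" "c \<le> part_row la r"
    and "hook_length la r c = t * e" "int (arm_length la r c) = \<lfloor>y * of_nat t\<rfloor>" "0 < t"
  shows "int t \<le> N \<and> int r \<le> N \<and> links_at la M N (int r) (int t) \<and>
    framed_row la M (int r) - floor_y (int t) = int c"
proof -
  define s where "s = int t"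
  define K where "K = part_col la c"
  have arm: "int (part_row la r) - int c = floor_y s"
    using assms(7) rc unfolding s_def floor_y_def arm_length_def by (simp add: of_nat_diff)
  have "r \<le> K" using le_part_row_iff_le_part_col[OF la rc(2,1)] rc unfolding K_def by simp
  have "K \<le> length la" using part_col_le_length[OF la rc(2)] unfolding K_def .
  have K_eq: "int K = int r + (s * int e - floor_y s) - 1"
    using int_hook_length[OF \<open>r \<le> K\<close>[unfolded K_def] rc(3)] arm assms(6) unfolding K_def s_def by simp
  have "s \<le> N" using K_eq \<open>K \<le> length la\<close> len floor_y_le[of s] rc assms(8)
    unfolding s_def by (simp add: algebra_simps)
  moreover have "int r \<le> N" using \<open>r \<le> K\<close> \<open>K \<le> length la\<close> len by linarith
  moreover have "c \<le> part_row la K" "\<not> c \<le> part_row la (K + 1)"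
    using le_part_row_iff_le_part_col[OF la rc(2), of K] le_part_row_iff_le_part_col[OF la rc(2), of "K + 1"]
      \<open>r \<le> K\<close> rc unfolding K_def by simp_all
  moreover have "framed_row la M (int r) = int (part_row la r)" "framed_row la M (int K) = int (part_row la K)"
    "framed_row la M (int K + 1) = int (part_row la (K + 1))"
    using rc \<open>r \<le> K\<close> unfolding framed_row_def by (simp_all add: nat_add_distrib)
  ultimately show ?thesis
    using K_eq arm \<open>K \<le> length la\<close> len unfolding links_at_def mem_lower_border_iff s_def
    by (simp add: algebra_simps)
qed

lemma num_bad_hooks_eq_link_count:
  assumes la: "is_partition la" and len: "int (length la) \<le> N"
  shows "num_bad_hooks e y (nat z) la = (\<Sum>s\<in>{1..N}. of_bool (\<not> z dvd s) * link_count la M N s)"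
proof -
  let ?B = "{(r, c). 1 \<le> r \<and> 1 \<le> c \<and> c \<le> part_row la r \<and>
       bad_hook e y (nat z) (hook_length la r c) (arm_length la r c)}"
  let ?I = "SIGMA s:{s\<in>{1..N}. \<not> z dvd s}. {r\<in>{1..N}. links_at la M N r s}"
  let ?cell = "\<lambda>(s, r). (nat r, nat (framed_row la M r - floor_y s))"
  have to_bad: "?cell (s, r) \<in> ?B \<and> 1 \<le> framed_row la M r - floor_y s" if "(s, r) \<in> ?I" for s r
  proof -
    from that have "1 \<le> s" "\<not> z dvd s" "1 \<le> r" "links_at la M N r s" by auto
    with bad_hook_if_links_at[OF la this] show ?thesis by (auto simp: le_nat_iff)
  qed
  have inj: "inj_on ?cell ?I"
  proof (rule inj_onI)
    fix x x' assume x: "x \<in> ?I" "x' \<in> ?I" and eq: "?cell x = ?cell x'"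
    obtain s r s' r' where sr: "x = (s, r)" "x' = (s', r')" by force
    have "r = r'" using x eq unfolding sr by (simp add: eq_nat_nat_iff)
    moreover have "1 \<le> framed_row la M r - floor_y s" "1 \<le> framed_row la M r' - floor_y s'"
      using to_bad x unfolding sr by blast+
    ultimately have "floor_y s = floor_y s'" using eq unfolding sr by (simp add: eq_nat_nat_iff)
    then show "x = x'" using floor_y_inj \<open>r = r'\<close> unfolding sr by blast
  qed
  have image: "?cell ` ?I = ?B"
  proof (intro subset_antisym subsetI)
    fix x assume "x \<in> ?cell ` ?I"
    then show "x \<in> ?B" using to_bad by auto
  next
    fix x assume "x \<in> ?B"
    then obtain r c t where x: "x = (r, c)" "1 \<le> r" "1 \<le> c" "c \<le> part_row la r"
      and t: "0 < t" "\<not> nat z dvd t" "hook_length la r c = t * e" "int (arm_length la r c) = \<lfloor>y * of_nat t\<rfloor>"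
      unfolding bad_hook_def by blast
    note link = links_at_if_bad_hook[OF la len x(2-4) t(3,4,1), of M]
    have "?cell (int t, int r) = x" using link x(1) by simp
    moreover have "(int t, int r) \<in> ?I" using link t x(2) nat_z_dvd_iff by simp
    ultimately show "x \<in> ?cell ` ?I" by (rule image_eqI[OF sym])
  qed
  have "num_bad_hooks e y (nat z) la = card ?I"
    unfolding num_bad_hooks_def image[symmetric] by (rule card_image[OF inj])
  also have "\<dots> = (\<Sum>s\<in>{s\<in>{1..N}. \<not> z dvd s}. link_count la M N s)"
    unfolding link_count_def by (subst card_SigmaI) (auto intro: finite_subset[of _ "{1..N}"])
  also have "\<dots> = (\<Sum>s\<in>{1..N}. of_bool (\<not> z dvd s) * link_count la M N s)"
    by (simp add: Int_def conj_commute)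
  finally show ?thesis .
qed

lemma linked_pairs_eq_num_bad_hooks:
  assumes la: "is_partition la" and len: "int (length la) \<le> n" and row1: "int (part_row la 1) \<le> n"
    and N: "N = (int e + 1) * n + 1" and M: "M = n + int e * N + 1"
  shows "linked_pairs la M N = 2 * num_bad_hooks e y (nat z) la
    + (\<Sum>s\<in>{1..N}. of_bool (\<not> z dvd s \<and> s * int e - 1 - floor_y s \<le> N - 1))"
proof -
  have "0 \<le> n" using len by linarith
  then have "n \<le> N" using N by (simp add: algebra_simps)
  then have "0 \<le> N" "int (length la) \<le> N" using len \<open>0 \<le> n\<close> by linarith+
  have "linked_pairs la M N = (\<Sum>s\<in>{1..N}. of_bool (\<not> z dvd s) * (link_count la M N s + link_count la M N (- s)))"
    by (rule linked_pairs_by_parameter[OF \<open>0 \<le> N\<close>])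
  also have "\<dots> = (\<Sum>s\<in>{1..N}. 2 * (of_bool (\<not> z dvd s) * link_count la M N s)
      + of_bool (\<not> z dvd s \<and> s * int e - 1 - floor_y s \<le> N - 1))"
  proof (intro sum.cong refl)
    fix s assume "s \<in> {1..N}"
    then show "of_bool (\<not> z dvd s) * (link_count la M N s + link_count la M N (- s)) =
      2 * (of_bool (\<not> z dvd s) * link_count la M N s) + of_bool (\<not> z dvd s \<and> s * int e - 1 - floor_y s \<le> N - 1)"
      using link_count_uminus[OF la len row1 N M, of s] by (cases "z dvd s") auto
  qed
  also have "\<dots> = 2 * num_bad_hooks e y (nat z) la
      + (\<Sum>s\<in>{1..N}. of_bool (\<not> z dvd s \<and> s * int e - 1 - floor_y s \<le> N - 1))"
    unfolding num_bad_hooks_eq_link_count[OF la \<open>int (length la) \<le> N\<close>, of M]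
    by (simp only: sum.distrib sum_distrib_left)
  finally show ?thesis .
qed

end

theorem mainTheorem2:
  fixes e :: nat and y :: rat and a z :: int and la mu :: "nat list"
  assumes "e \<ge> 3"
    and "1 \<le> y" and "y \<le> of_nat e - 1"
    and "quotient_of y = (a, z)"
    and "z > 1"
    and "is_partition la" and "is_partition mu"
    and "ladder_equiv (int e * z) (a) la mu"
  shows "num_bad_hooks e y (nat z) la = num_bad_hooks e y (nat z) mu"
proof -
  interpret rational_slope e y a z using assms(1-5) by unfold_locales
  define n where "n = int (sum_list la + sum_list mu)"
  define N where "N = (int e + 1) * n + 1"
  define M where "M = n + int e * N + 1"
  have la: "int (length la) \<le> n" "int (part_row la 1) \<le> n"
    and mu: "int (length mu) \<le> n" "int (part_row mu 1) \<le> n"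
    using length_le_sum_list[of la] length_le_sum_list[of mu] part_row_le_sum_list[of la 1]
      part_row_le_sum_list[of mu 1] assms(6,7) unfolding n_def is_partition_def by simp_all
  have "n \<le> N" "n \<le> M" using la unfolding N_def M_def by (simp_all add: algebra_simps add_increasing)
  then have "linked_pairs la M N = linked_pairs mu M N"
    using ladder_equiv_linked_pairs[OF assms(8,6,7)] la mu by simp
  then show ?thesis
    using linked_pairs_eq_num_bad_hooks[OF assms(6) la N_def M_def]
      linked_pairs_eq_num_bad_hooks[OF assms(7) mu N_def M_def] by simp
qed

end
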